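(* Against an oblivious adversary, it is possible to gather two robots having the same speed in the ASYNC$_{IC}$ model, i.e. with arbitrary wait times $\mathcal{W} \ge 0$ and zero computation delay $\mathcal{C}=0$: there is a randomized algorithm such that, for every choice of wait times by the adversary, the two robots gather with positive probability.
   Context: Two robots are anonymous, oblivious (no memory of past cycles), silent (no communication) points in the Euclidean plane with no common coordinate system, each having access to random bits. Each robot repeatedly executes a cycle in which it stays still for a while, then moves: the look instant (when it obtains a snapshot of the other robot's current position, which may be in motion) splits the stationary period into a wait time $\mathcal{W}$ (before the look) and a computation delay $\mathcal{C}$ (after the look, before moving). The robot then moves at its (constant) speed to a destination computed from the snapshot and its random bits, reaching it in the same cycle (rigid movement). A robot that looks and finds the other robot at its own position decides it has gathered and never moves again; gathering means both robots are at the same point. The scheduler is an adversary (asynchronous model ASYNC: robots' cycles are independent) that chooses the wait times and computation delays of every cycle of each robot. An oblivious adversary knows the algorithm but not the outcomes of the random bits, so it fixes the whole sequences of wait times and computation delays of both robots before the execution starts. ASYNC$_{IC}$ is the ASYNC model with all computation delays equal to $0$. *)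

theory Defs
  imports "HOL-Probability.Probability"
begin

text \<open>Model of two oblivious, silent, anonymous robots in the plane (identified with
  the complex numbers) under ASYNC with zero computation delay (ASYNC_IC).
  Robots are indexed by bool (True = robot 1, False = robot 2).\<close>

type_synonym bits = "nat \<Rightarrow> bool"

text \<open>An algorithm: given the own position and the observed position of the other
  robot (both in the robot's local coordinate system of the current cycle) and the
  random bits of the current cycle, compute the destination (local coordinates).\<close>
type_synonym algo = "complex \<Rightarrow> complex \<Rightarrow> bits \<Rightarrow> complex"

text \<open>Local coordinate systems: arbitrary similarities of the plane
  (translation, rotation, scaling, possibly reflection).\<close>
definition similarity :: "(complex \<Rightarrow> complex) \<Rightarrow> bool" where
  "similarity f \<longleftrightarrow> (\<exists>a b. a \<noteq> 0 \<and>
      ((\<forall>z. f z = a * z + b) \<or> (\<forall>z. f z = a * cnj z + b)))"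

text \<open>State of one robot: time of its last look (= start of its last move),
  start point and destination of its last move, number of completed cycles, and
  whether it has decided that it gathered.\<close>
record rstate =
  lastlook :: real
  startp :: complex
  dest :: complex
  ncyc :: nat
  stopped :: bool

definition init_state :: "complex \<Rightarrow> rstate" where
  "init_state p = \<lparr>lastlook = 0, startp = p, dest = p, ncyc = 0, stopped = False\<rparr>"

definition rpos :: "real \<Rightarrow> rstate \<Rightarrow> real \<Rightarrow> complex" where
  "rpos v s t = startp s +
     of_real (min 1 ((t - lastlook s) * v / cmod (dest s - startp s))) * (dest s - startp s)"

definition next_look :: "real \<Rightarrow> (nat \<Rightarrow> real) \<Rightarrow> rstate \<Rightarrow> real" where
  "next_look v W s = lastlook s + cmod (dest s - startp s) / v + W (ncyc s)"

text \<open>A look (with immediate start of the move, since the computation delay is 0),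
  given the observed global position q of the other robot. F k is the map from
  global to local coordinates in cycle k, r k the random bits of cycle k.\<close>
definition do_look :: "algo \<Rightarrow> real \<Rightarrow> (nat \<Rightarrow> real) \<Rightarrow> (nat \<Rightarrow> complex \<Rightarrow> complex)
    \<Rightarrow> (nat \<Rightarrow> bits) \<Rightarrow> rstate \<Rightarrow> complex \<Rightarrow> rstate" where
  "do_look A v W F r s q =
    (let t = next_look v W s; x = dest s; k = ncyc s in
     if q = x then s\<lparr>lastlook := t, startp := x, dest := x, stopped := True\<rparr>
     else s\<lparr>lastlook := t, startp := x,
            dest := inv (F k) (A (F k x) (F k q) (r k)), ncyc := Suc k\<rparr>)"

text \<open>One event of the execution: the pending look that happens first in time
  (ties broken in favour of robot True; with zero computation delay this is
  consistent, as a robot is still at its start point at its look instant).\<close>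
definition exec_step :: "algo \<Rightarrow> real \<Rightarrow> (bool \<Rightarrow> nat \<Rightarrow> real)
    \<Rightarrow> (bool \<Rightarrow> nat \<Rightarrow> complex \<Rightarrow> complex) \<Rightarrow> (bool \<Rightarrow> nat \<Rightarrow> bits)
    \<Rightarrow> rstate \<times> rstate \<Rightarrow> rstate \<times> rstate" where
  "exec_step A v W F r st =
    (let s1 = fst st; s2 = snd st in
     if stopped s1 \<and> stopped s2 then st
     else if \<not> stopped s1 \<and> (stopped s2 \<or> next_look v (W True) s1 \<le> next_look v (W False) s2)
     then (do_look A v (W True) (F True) (r True) s1 (rpos v s2 (next_look v (W True) s1)), s2)
     else (s1, do_look A v (W False) (F False) (r False) s2 (rpos v s1 (next_look v (W False) s2))))"

definition execution :: "algo \<Rightarrow> real \<Rightarrow> (bool \<Rightarrow> nat \<Rightarrow> real)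
    \<Rightarrow> (bool \<Rightarrow> nat \<Rightarrow> complex \<Rightarrow> complex) \<Rightarrow> (bool \<Rightarrow> nat \<Rightarrow> bits)
    \<Rightarrow> complex \<Rightarrow> complex \<Rightarrow> nat \<Rightarrow> rstate \<times> rstate" where
  "execution A v W F r p1 p2 n = (exec_step A v W F r ^^ n) (init_state p1, init_state p2)"

definition gathered :: "algo \<Rightarrow> real \<Rightarrow> (bool \<Rightarrow> nat \<Rightarrow> real)
    \<Rightarrow> (bool \<Rightarrow> nat \<Rightarrow> complex \<Rightarrow> complex) \<Rightarrow> (bool \<Rightarrow> nat \<Rightarrow> bits)
    \<Rightarrow> complex \<Rightarrow> complex \<Rightarrow> bool" where
  "gathered A v W F r p1 p2 \<longleftrightarrow>
    (\<exists>n. let st = execution A v W F r p1 p2 n in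
       stopped (fst st) \<and> stopped (snd st) \<and> dest (fst st) = dest (snd st))"

text \<open>Random bits: independent fair coins, indexed by robot, cycle, bit number.\<close>
definition coin_space :: "(bool \<times> nat \<times> nat \<Rightarrow> bool) measure" where
  "coin_space = (\<Pi>\<^sub>M i\<in>UNIV. measure_pmf (bernoulli_pmf (1/2)))"

definition bits_of :: "(bool \<times> nat \<times> nat \<Rightarrow> bool) \<Rightarrow> bool \<Rightarrow> nat \<Rightarrow> bits" where
  "bits_of \<omega> i k j = \<omega> (i, k, j)"

end

theory Submission
  imports Defs
begin

text \<open>Each robot moves the fraction c of the way towards the position where it sees the
  other robot, where c is a random rational that takes every rational value with positive
  probability. As the adversary is oblivious, it suffices to show that for every schedule
  some finite prescription of these ratios forces gathering.

  Let X be the robot that looks first. If the other robot looks only after X could have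
  reached it, X moves all the way (ratio 1) and finds it still there. Otherwise, if the later
  waits of one robot add up to more than the second wait of the other, the first robot stays
  (ratio 0) at the end of a suitably chosen first move and the other robot reaches it (ratio
  1) during its second move. If neither, both robots wait equally long in their second cycle:
  after first moves of ratio 1 they look again simultaneously and meet halfway.\<close>

definition robot :: "rstate \<times> rstate \<Rightarrow> bool \<Rightarrow> rstate" where
  "robot st i = (if i then fst st else snd st)"

definition robot_upd :: "rstate \<times> rstate \<Rightarrow> bool \<Rightarrow> rstate \<Rightarrow> rstate \<times> rstate" where
  "robot_upd st i s = (if i then (s, snd st) else (fst st, s))"

lemma robot_robot_upd: "robot (robot_upd st i s) k = (if k = i then s else robot st k)"
  by (cases i; cases k) (auto simp: robot_def robot_upd_def)

lemma robot_upd_same [simp]: "robot (robot_upd st i s) i = s"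
  and robot_upd_other [simp]: "robot (robot_upd st i s) (\<not> i) = robot st (\<not> i)"
  and robot_upd_other' [simp]: "robot (robot_upd st (\<not> i) s) i = robot st i"
  by (simp_all add: robot_robot_upd)

definition robot_looks :: "algo \<Rightarrow> real \<Rightarrow> (bool \<Rightarrow> nat \<Rightarrow> real)
    \<Rightarrow> (bool \<Rightarrow> nat \<Rightarrow> complex \<Rightarrow> complex) \<Rightarrow> (bool \<Rightarrow> nat \<Rightarrow> bits)
    \<Rightarrow> bool \<Rightarrow> rstate \<times> rstate \<Rightarrow> rstate \<times> rstate" where
  "robot_looks A v W F r i st = robot_upd st i (do_look A v (W i) (F i) (r i) (robot st i)
     (rpos v (robot st (\<not> i)) (next_look v (W i) (robot st i))))"

lemma exec_step_eq_robot_looks: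
  assumes "\<not> stopped (robot st i)"
    and "stopped (robot st (\<not> i)) \<or> next_look v (W i) (robot st i) < next_look v (W (\<not> i)) (robot st (\<not> i))
         \<or> (i \<and> next_look v (W i) (robot st i) \<le> next_look v (W (\<not> i)) (robot st (\<not> i)))"
  shows "exec_step A v W F r st = robot_looks A v W F r i st"
  using assms
  by (cases st; cases i) (auto simp: exec_step_def robot_looks_def robot_def robot_upd_def Let_def)

lemma exec_step_next_looker:
  assumes "\<not> (stopped (robot st True) \<and> stopped (robot st False))"
  obtains i where "\<not> stopped (robot st i)"
    and "stopped (robot st (\<not> i)) \<or> next_look v (W i) (robot st i) \<le> next_look v (W (\<not> i)) (robot st (\<not> i))"
    and "exec_step A v W F r st = robot_looks A v W F r i st"
proof (cases "\<not> stopped (fst st) \<and>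
    (stopped (snd st) \<or> next_look v (W True) (fst st) \<le> next_look v (W False) (snd st))")
  case True
  then show ?thesis
    by (intro that[of True]) (cases st, auto simp: exec_step_def robot_looks_def robot_def robot_upd_def Let_def)
next
  case False
  then show ?thesis using assms
    by (intro that[of False]) (cases st, auto simp: exec_step_def robot_looks_def robot_def robot_upd_def Let_def)
qed

lemma init_state_simps [simp]:
  "lastlook (init_state p) = 0" "startp (init_state p) = p" "dest (init_state p) = p"
  "ncyc (init_state p) = 0" "stopped (init_state p) = False"
  by (simp_all add: init_state_def)

lemma rpos_lastlook: "rpos v s (lastlook s) = startp s"
  by (simp add: rpos_def)

lemma rpos_stationary: "startp s = dest s \<Longrightarrow> rpos v s t = dest s"
  by (simp add: rpos_def)

lemma rpos_on_segment:
  assumes "v > 0" "lastlook s \<le> t"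
  obtains \<theta> where "0 \<le> \<theta>" "\<theta> \<le> 1" "rpos v s t = startp s + of_real \<theta> * (dest s - startp s)"
proof -
  let ?\<theta> = "min 1 ((t - lastlook s) * v / cmod (dest s - startp s))"
  have "0 \<le> ?\<theta>" using assms by auto
  then show ?thesis by (intro that[of ?\<theta>]) (auto simp: rpos_def)
qed

lemma rpos_arrived:
  assumes "v > 0" "lastlook s + cmod (dest s - startp s) / v \<le> t"
  shows "rpos v s t = dest s"
proof (cases "dest s = startp s")
  case False
  then have "cmod (dest s - startp s) \<le> (t - lastlook s) * v"
    using assms by (simp add: field_simps)
  then have "1 \<le> (t - lastlook s) * v / cmod (dest s - startp s)"
    using False by (simp add: field_simps)
  then show ?thesis by (simp add: rpos_def min_def)
qed (simp add: rpos_def)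

text \<open>The ratio is the number of leading heads of the coins of the cycle, mapped onto the
  rationals by the enumeration from_nat; thus each rational is drawn with positive
  probability.\<close>

definition coin_ratio :: "bits \<Rightarrow> real" where
  "coin_ratio b = real_of_rat (from_nat (LEAST n. \<not> b n))"

definition random_approach :: algo where
  "random_approach x q b = x + of_real (coin_ratio b) * (q - x)"

lemma random_approach_equivariant:
  assumes "similarity G"
  shows "inv G (random_approach (G x) (G q) b) = random_approach x q b"
proof -
  obtain a c where "a \<noteq> 0" and G: "(\<forall>z. G z = a * z + c) \<or> (\<forall>z. G z = a * cnj z + c)"
    using assms unfolding similarity_def by blast
  then have "inj G" by (auto simp: inj_def)
  moreover from G have "random_approach (G x) (G q) b = G (random_approach x q b)"
    by (auto simp: random_approach_def algebra_simps)
  ultimately show ?thesis by simp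
qed

lemma do_look_random_approach:
  assumes "similarity (F (ncyc s))"
  shows "do_look random_approach v W F r s q = (if q = dest s
     then s\<lparr>lastlook := next_look v W s, startp := dest s, dest := dest s, stopped := True\<rparr>
     else s\<lparr>lastlook := next_look v W s, startp := dest s,
       dest := dest s + of_real (coin_ratio (r (ncyc s))) * (q - dest s), ncyc := Suc (ncyc s)\<rparr>)"
  using random_approach_equivariant[OF assms]
  by (simp add: do_look_def random_approach_def Let_def)

definition gathered_state :: "rstate \<times> rstate \<Rightarrow> bool" where
  "gathered_state st \<longleftrightarrow> stopped (fst st) \<and> stopped (snd st) \<and> dest (fst st) = dest (snd st)"

definition gathers_from :: "real \<Rightarrow> (bool \<Rightarrow> nat \<Rightarrow> real) \<Rightarrow> (bool \<Rightarrow> nat \<Rightarrow> complex \<Rightarrow> complex)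
    \<Rightarrow> (bool \<Rightarrow> nat \<Rightarrow> bits) \<Rightarrow> rstate \<times> rstate \<Rightarrow> bool" where
  "gathers_from v W F r st \<longleftrightarrow> (\<exists>m. gathered_state ((exec_step random_approach v W F r ^^ m) st))"

lemma gathers_from_exec_step:
  "gathers_from v W F r (exec_step random_approach v W F r st) \<Longrightarrow> gathers_from v W F r st"
  unfolding gathers_from_def by (metis funpow_Suc_right comp_apply)

text \<open>Robot j (the stayer) sits at P from time t0 on and, choosing ratio 0, stays there in its
  cycles k0, ..., n - 1, whose looks happen at the times f k. The other robot (the approacher)
  looks at time \<gamma> in its cycle kL, sees the stayer at P and moves there from Q with ratio 1,
  arriving at \<gamma> + e, no later than the look of cycle n of the stayer.\<close>

locale stayer_approacher =
  fixes v :: real and W :: "bool \<Rightarrow> nat \<Rightarrow> real" and F :: "bool \<Rightarrow> nat \<Rightarrow> complex \<Rightarrow> complex"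
    and r :: "bool \<Rightarrow> nat \<Rightarrow> bits" and j :: bool and P Q :: complex
    and t0 \<gamma> e :: real and f :: "nat \<Rightarrow> real" and k0 n kL :: nat
  assumes speed_pos: "v > 0"
    and waits_nonneg: "\<And>i k. W i k \<ge> 0"
    and frames_similar: "\<And>i k. similarity (F i k)"
    and P_neq_Q: "P \<noteq> Q"
    and e_eq: "e = cmod (P - Q) / v"
    and settled_before_launch: "t0 \<le> \<gamma>"
    and f_Suc: "\<And>k. f (Suc k) = f k + W j (Suc k)"
    and arrival_before_f_n: "\<gamma> + e \<le> f n"
    and stayer_ratios: "\<And>k. k0 \<le> k \<Longrightarrow> k < n \<Longrightarrow> coin_ratio (r j k) = 0"
    and launch_ratio: "coin_ratio (r (\<not> j) kL) = 1"
begin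

abbreviation look :: "bool \<Rightarrow> rstate \<times> rstate \<Rightarrow> rstate \<times> rstate" where
  "look \<equiv> robot_looks random_approach v W F r"

lemma e_pos: "e > 0"
  using P_neq_Q speed_pos by (simp add: e_eq)

lemma f_mono: "k \<le> m \<Longrightarrow> f k \<le> f m"
  by (rule lift_Suc_mono_le[of f]) (use f_Suc waits_nonneg in auto)

definition stayer_inv :: "rstate \<Rightarrow> bool" where
  "stayer_inv sF \<longleftrightarrow> (stopped sF \<and> startp sF = P \<and> dest sF = P) \<or>
     (\<not> stopped sF \<and> dest sF = P \<and> k0 \<le> ncyc sF \<and> ncyc sF \<le> n \<and>
      next_look v (W j) sF = f (ncyc sF) \<and> (\<forall>t\<ge>t0. rpos v sF t = P))"

text \<open>The three phases of the approacher: before its launch (moving towards Q without ever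
  passing through P), travelling from Q to P, and stopped at P.\<close>

definition approacher_inv :: "rstate \<Rightarrow> rstate \<Rightarrow> bool" where
  "approacher_inv sF sL \<longleftrightarrow>
    (\<not> stopped sL \<and> ncyc sL = kL \<and> dest sL = Q \<and> next_look v (W (\<not> j)) sL = \<gamma> \<and>
       (\<forall>t\<ge>lastlook sL. rpos v sL t \<noteq> P) \<and> (\<not> stopped sF \<longrightarrow> lastlook sL \<le> next_look v (W j) sF)) \<or>
    (\<not> stopped sL \<and> startp sL = Q \<and> dest sL = P \<and> lastlook sL = \<gamma> \<and>
       \<gamma> + e \<le> next_look v (W (\<not> j)) sL \<and> (\<not> stopped sF \<longrightarrow> \<gamma> \<le> next_look v (W j) sF)) \<or>
    (stopped sL \<and> startp sL = P \<and> dest sL = P)"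

definition invariant :: "rstate \<times> rstate \<Rightarrow> bool" where
  "invariant st \<longleftrightarrow> stayer_inv (robot st j) \<and> approacher_inv (robot st j) (robot st (\<not> j))"

definition potential :: "rstate \<times> rstate \<Rightarrow> nat" where
  "potential st = (if stopped (robot st j) then 0 else Suc n - ncyc (robot st j)) +
     (if stopped (robot st (\<not> j)) then 0 else if dest (robot st (\<not> j)) = P then 1 else 2)"

lemma stayer_at_P: "stayer_inv sF \<Longrightarrow> t0 \<le> t \<Longrightarrow> rpos v sF t = P"
  by (auto simp: stayer_inv_def rpos_stationary)

lemma approacher_inv_mono:
  assumes "approacher_inv sF sL" "\<not> stopped sF"
    and "next_look v (W j) sF \<le> next_look v (W j) sF'"
  shows "approacher_inv sF' sL"
  using assms unfolding approacher_inv_def by fastforce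

lemma stayer_halts:
  assumes inv: "invariant st" and active: "\<not> stopped (robot st j)"
    and seen: "rpos v (robot st (\<not> j)) (next_look v (W j) (robot st j)) = P"
  shows "invariant (look j st) \<and> potential (look j st) < potential st"
proof -
  define sF where "sF = robot st j"
  define sF' where "sF' = sF\<lparr>lastlook := next_look v (W j) sF, startp := P, dest := P, stopped := True\<rparr>"
  have sF: "dest sF = P" "ncyc sF \<le> n"
    using inv active by (auto simp: invariant_def stayer_inv_def sF_def)
  have look: "look j st = robot_upd st j sF'"
    using seen sF do_look_random_approach[of "F j" "robot st j", OF frames_similar]
    by (simp add: robot_looks_def sF'_def sF_def)
  have "stayer_inv sF'" by (simp add: stayer_inv_def sF'_def)
  moreover have "approacher_inv sF' (robot st (\<not> j))"
    using inv by (auto simp: invariant_def approacher_inv_def sF'_def)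
  ultimately have "invariant (look j st)" by (simp add: invariant_def look)
  moreover have "potential (look j st) < potential st"
    using active sF by (auto simp: potential_def look sF'_def sF_def)
  ultimately show ?thesis ..
qed

lemma stayer_stays:
  assumes inv: "invariant st" and active: "\<not> stopped (robot st j)"
    and unseen: "rpos v (robot st (\<not> j)) (next_look v (W j) (robot st j)) \<noteq> P"
    and before: "ncyc (robot st j) < n"
  shows "invariant (look j st) \<and> potential (look j st) < potential st"
proof -
  define sF where "sF = robot st j"
  define k where "k = ncyc sF"
  define sF' where "sF' = sF\<lparr>lastlook := f k, startp := P, dest := P, ncyc := Suc k\<rparr>"
  have sF: "dest sF = P" "k0 \<le> k" "next_look v (W j) sF = f k"
    using inv active by (auto simp: invariant_def stayer_inv_def sF_def k_def)
  have "coin_ratio (r j k) = 0"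
    using stayer_ratios sF(2) before by (simp add: sF_def k_def)
  then have look: "look j st = robot_upd st j sF'"
    using unseen sF do_look_random_approach[of "F j" "robot st j", OF frames_similar]
    by (simp add: robot_looks_def sF'_def sF_def k_def)
  have next_look': "next_look v (W j) sF' = f (Suc k)"
    using f_Suc by (simp add: next_look_def sF'_def)
  have "stayer_inv sF'"
    unfolding stayer_inv_def using active before sF(2) next_look'
    by (simp add: sF'_def sF_def k_def rpos_stationary)
  moreover have "approacher_inv sF' (robot st (\<not> j))"
  proof (rule approacher_inv_mono)
    show "approacher_inv sF (robot st (\<not> j))"
      using inv by (simp add: invariant_def sF_def)
    show "\<not> stopped sF"
      using active by (simp add: sF_def)
    show "next_look v (W j) sF \<le> next_look v (W j) sF'"
      using sF(3) next_look' f_mono[of k "Suc k"] by simp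
  qed
  ultimately have "invariant (look j st)" by (simp add: invariant_def look)
  moreover have "potential (look j st) < potential st"
    using active before by (simp add: potential_def look sF'_def sF_def k_def) arith
  ultimately show ?thesis ..
qed

text \<open>The stayer can miss the approacher at P only before the approacher arrives, hence
  before its cycle n.\<close>

lemma stayer_unseen_cycle_lt:
  assumes inv: "invariant st" and active: "\<not> stopped (robot st j)"
    and first: "stopped (robot st (\<not> j)) \<or>
      next_look v (W j) (robot st j) \<le> next_look v (W (\<not> j)) (robot st (\<not> j))"
    and unseen: "rpos v (robot st (\<not> j)) (next_look v (W j) (robot st j)) \<noteq> P"
  shows "ncyc (robot st j) < n"
proof -
  define sL where "sL = robot st (\<not> j)"
  define \<tau> where "\<tau> = next_look v (W j) (robot st j)"
  have "\<tau> < \<gamma> + e"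
  proof -
    have "approacher_inv (robot st j) sL"
      using inv by (simp add: invariant_def sL_def)
    then consider
      (waiting) "\<not> stopped sL" "next_look v (W (\<not> j)) sL = \<gamma>"
    | (travelling) "startp sL = Q" "dest sL = P" "lastlook sL = \<gamma>"
    | (halted) "startp sL = P" "dest sL = P"
      unfolding approacher_inv_def by blast
    then show ?thesis
    proof cases
      case waiting
      then show ?thesis using first e_pos by (simp add: sL_def \<tau>_def)
    next
      case travelling
      show ?thesis
      proof (rule ccontr)
        assume "\<not> \<tau> < \<gamma> + e"
        then have "rpos v sL \<tau> = P"
          using rpos_arrived[OF speed_pos, of sL \<tau>] travelling e_eq
          by (simp add: norm_minus_commute)
        then show False using unseen by (simp add: sL_def \<tau>_def)
      qed
    next
      case halted
      then show ?thesis using unseen by (simp add: rpos_stationary sL_def)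
    qed
  qed
  moreover have "\<tau> = f (ncyc (robot st j))"
    using inv active by (simp add: invariant_def stayer_inv_def \<tau>_def)
  ultimately show ?thesis
    using f_mono[of n "ncyc (robot st j)"] arrival_before_f_n by linarith
qed

lemma stayer_step:
  assumes "invariant st" "\<not> stopped (robot st j)"
    and "stopped (robot st (\<not> j)) \<or>
      next_look v (W j) (robot st j) \<le> next_look v (W (\<not> j)) (robot st (\<not> j))"
  shows "invariant (look j st) \<and> potential (look j st) < potential st"
proof (cases "rpos v (robot st (\<not> j)) (next_look v (W j) (robot st j)) = P")
  case True
  then show ?thesis using stayer_halts assms by blast
next
  case False
  from stayer_stays[OF assms(1,2) False stayer_unseen_cycle_lt[OF assms False]]
  show ?thesis .
qed

lemma approacher_sees_P:
  assumes "invariant st" "t0 \<le> next_look v (W (\<not> j)) (robot st (\<not> j))"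
  shows "look (\<not> j) st = robot_upd st (\<not> j)
    (do_look random_approach v (W (\<not> j)) (F (\<not> j)) (r (\<not> j)) (robot st (\<not> j)) P)"
  using assms stayer_at_P by (simp add: robot_looks_def invariant_def)

lemma approacher_launches:
  assumes inv: "invariant st" and active: "\<not> stopped (robot st (\<not> j))"
    and first: "stopped (robot st j) \<or> \<gamma> \<le> next_look v (W j) (robot st j)"
    and waiting: "ncyc (robot st (\<not> j)) = kL" "dest (robot st (\<not> j)) = Q"
      "next_look v (W (\<not> j)) (robot st (\<not> j)) = \<gamma>"
  shows "invariant (look (\<not> j) st) \<and> potential (look (\<not> j) st) < potential st"
proof -
  define sL where "sL = robot st (\<not> j)"
  define sL' where "sL' = sL\<lparr>lastlook := \<gamma>, startp := Q, dest := P, ncyc := Suc kL\<rparr>"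
  have look: "look (\<not> j) st = robot_upd st (\<not> j) sL'"
    using approacher_sees_P[OF inv] waiting settled_before_launch P_neq_Q launch_ratio
      do_look_random_approach[of "F (\<not> j)" sL, OF frames_similar]
    by (simp add: sL'_def sL_def)
  have "\<gamma> + e \<le> next_look v (W (\<not> j)) sL'"
    using waits_nonneg[of "\<not> j" "Suc kL"] e_eq by (simp add: sL'_def next_look_def norm_minus_commute)
  then have "approacher_inv (robot st j) sL'"
    using active first by (auto simp: approacher_inv_def sL'_def sL_def)
  then have "invariant (look (\<not> j) st)"
    using inv by (simp add: look invariant_def)
  moreover have "potential (look (\<not> j) st) < potential st"
    using active waiting P_neq_Q by (simp add: look potential_def sL'_def sL_def)
  ultimately show ?thesis ..
qed

lemma approacher_arrives:
  assumes inv: "invariant st" and active: "\<not> stopped (robot st (\<not> j))"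
    and travelling: "dest (robot st (\<not> j)) = P" "\<gamma> + e \<le> next_look v (W (\<not> j)) (robot st (\<not> j))"
  shows "invariant (look (\<not> j) st) \<and> potential (look (\<not> j) st) < potential st"
proof -
  define sL where "sL = robot st (\<not> j)"
  define sL' where "sL' = sL\<lparr>lastlook := next_look v (W (\<not> j)) sL, startp := P, dest := P, stopped := True\<rparr>"
  have "t0 \<le> next_look v (W (\<not> j)) sL"
    using travelling settled_before_launch e_pos unfolding sL_def by linarith
  then have look: "look (\<not> j) st = robot_upd st (\<not> j) sL'"
    using approacher_sees_P[OF inv] travelling by (simp add: sL'_def sL_def do_look_def Let_def)
  have "approacher_inv (robot st j) sL'"
    by (simp add: approacher_inv_def sL'_def)
  then have "invariant (look (\<not> j) st)"
    using inv by (simp add: look invariant_def)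
  moreover have "potential (look (\<not> j) st) < potential st"
    using active travelling by (simp add: look potential_def sL'_def sL_def)
  ultimately show ?thesis ..
qed

lemma approacher_step:
  assumes inv: "invariant st" and active: "\<not> stopped (robot st (\<not> j))"
    and first: "stopped (robot st j) \<or>
      next_look v (W (\<not> j)) (robot st (\<not> j)) \<le> next_look v (W j) (robot st j)"
  shows "invariant (look (\<not> j) st) \<and> potential (look (\<not> j) st) < potential st"
proof -
  have "approacher_inv (robot st j) (robot st (\<not> j))"
    using inv by (simp add: invariant_def)
  with active consider
    (waiting) "ncyc (robot st (\<not> j)) = kL" "dest (robot st (\<not> j)) = Q"
      "next_look v (W (\<not> j)) (robot st (\<not> j)) = \<gamma>"
  | (travelling) "dest (robot st (\<not> j)) = P" "\<gamma> + e \<le> next_look v (W (\<not> j)) (robot st (\<not> j))"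
    unfolding approacher_inv_def by blast
  then show ?thesis
  proof cases
    case waiting
    then show ?thesis using approacher_launches[OF inv active] first by simp
  next
    case travelling
    then show ?thesis by (rule approacher_arrives[OF inv active])
  qed
qed

lemma gathers_from_invariant: "invariant st \<Longrightarrow> gathers_from v W F r st"
proof (induction "potential st" arbitrary: st rule: less_induct)
  case less
  show ?case
  proof (cases "stopped (robot st True) \<and> stopped (robot st False)")
    case True
    then have "stopped (robot st j)" "stopped (robot st (\<not> j))"
      by (cases j; simp)+
    with less.prems have "dest (robot st j) = P" "dest (robot st (\<not> j)) = P"
      by (auto simp: invariant_def stayer_inv_def approacher_inv_def)
    with True have "gathered_state st"
      by (cases j) (auto simp: gathered_state_def robot_def)
    then show ?thesis
      unfolding gathers_from_def by (metis funpow_0)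
  next
    case False
    then obtain i where i: "\<not> stopped (robot st i)"
      "stopped (robot st (\<not> i)) \<or> next_look v (W i) (robot st i) \<le> next_look v (W (\<not> i)) (robot st (\<not> i))"
      "exec_step random_approach v W F r st = look i st"
      by (rule exec_step_next_looker)
    have "invariant (look i st) \<and> potential (look i st) < potential st"
    proof (cases "i = j")
      case True
      then show ?thesis using stayer_step[OF less.prems] i by simp
    next
      case False
      then have "i = (\<not> j)" by auto
      then show ?thesis using approacher_step[OF less.prems] i by simp
    qed
    then have "gathers_from v W F r (look i st)"
      using less.hyps by blast
    then show ?thesis
      using gathers_from_exec_step[of v W F r st] i(3) by simp
  qed
qed

end

lemma gathers_from_gathered: "gathered_state st \<Longrightarrow> gathers_from v W F r st"
  unfolding gathers_from_def by (metis funpow_0)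

lemma robot_looks_halts:
  assumes "rpos v (robot st (\<not> i)) (next_look v (W i) (robot st i)) = dest (robot st i)"
  shows "robot_looks A v W F r i st = robot_upd st i ((robot st i)\<lparr>lastlook := next_look v (W i) (robot st i),
      startp := dest (robot st i), dest := dest (robot st i), stopped := True\<rparr>)"
  using assms by (simp add: robot_looks_def do_look_def Let_def)

lemma parked_robots_gather:
  assumes "v > 0"
    and parked: "\<And>i. \<not> stopped (robot st i) \<and> dest (robot st i) = M \<and>
      (\<forall>t\<ge>T. rpos v (robot st i) t = M) \<and> T \<le> next_look v (W i) (robot st i)"
  shows "gathers_from v W F r st"
proof -
  have "\<not> (stopped (robot st True) \<and> stopped (robot st False))"
    using parked by blast
  then obtain i where i: "exec_step random_approach v W F r st = robot_looks random_approach v W F r i st"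
    by (metis exec_step_next_looker)
  define s1 where "s1 = (robot st i)\<lparr>lastlook := next_look v (W i) (robot st i),
      startp := M, dest := M, stopped := True\<rparr>"
  define st1 where "st1 = robot_upd st i s1"
  have step1: "exec_step random_approach v W F r st = st1"
    using parked[of i] parked[of "\<not> i"] by (simp add: i robot_looks_halts st1_def s1_def)
  define s2 where "s2 = (robot st (\<not> i))\<lparr>lastlook := next_look v (W (\<not> i)) (robot st (\<not> i)),
      startp := M, dest := M, stopped := True\<rparr>"
  have "exec_step random_approach v W F r st1 = robot_looks random_approach v W F r (\<not> i) st1"
    using parked[of "\<not> i"] by (intro exec_step_eq_robot_looks) (simp_all add: st1_def s1_def)
  also have "\<dots> = robot_upd st1 (\<not> i) s2"
    using parked[of "\<not> i"] by (simp add: robot_looks_halts st1_def s1_def s2_def rpos_stationary)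
  finally have step2: "exec_step random_approach v W F r st1 = robot_upd st1 (\<not> i) s2" .
  have "gathered_state (robot_upd st1 (\<not> i) s2)"
    by (cases i) (simp_all add: gathered_state_def robot_upd_def st1_def s1_def s2_def)
  then show ?thesis
    using step1 step2 gathers_from_gathered gathers_from_exec_step by metis
qed

lemma robot_looks_halfway:
  assumes "similarity (F i (ncyc (robot st i)))"
    and "coin_ratio (r i (ncyc (robot st i))) = 1/2"
    and "rpos v (robot st (\<not> i)) (next_look v (W i) (robot st i)) = q" "q \<noteq> dest (robot st i)"
  shows "robot_looks random_approach v W F r i st = robot_upd st i ((robot st i)\<lparr>
      lastlook := next_look v (W i) (robot st i), startp := dest (robot st i),
      dest := (dest (robot st i) + q) / 2, ncyc := Suc (ncyc (robot st i))\<rparr>)"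
proof -
  have "robot_looks random_approach v W F r i st = robot_upd st i ((robot st i)\<lparr>
      lastlook := next_look v (W i) (robot st i), startp := dest (robot st i),
      dest := dest (robot st i) + of_real (coin_ratio (r i (ncyc (robot st i)))) * (q - dest (robot st i)),
      ncyc := Suc (ncyc (robot st i))\<rparr>)"
    using do_look_random_approach[of "F i" "robot st i", OF assms(1)] assms(3,4)
    by (simp add: robot_looks_def)
  also have "dest (robot st i) + of_real (coin_ratio (r i (ncyc (robot st i)))) * (q - dest (robot st i))
      = (dest (robot st i) + q) / 2"
    unfolding assms(2) by (simp add: field_simps)
  finally show ?thesis .
qed

text \<open>Two robots that look at the same instant T, each seeing the other at its destination,
  both head for the midpoint and arrive there at the same time.\<close>

lemma midpoint_gather:
  assumes speed: "v > 0" and waits: "\<And>i k. W i k \<ge> 0" and frames: "\<And>i k. similarity (F i k)"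
    and sync: "\<And>i. \<not> stopped (robot st i) \<and> next_look v (W i) (robot st i) = T \<and>
      (\<forall>t\<ge>T. rpos v (robot st i) t = dest (robot st i)) \<and> coin_ratio (r i (ncyc (robot st i))) = 1/2"
    and apart: "dest (robot st True) \<noteq> dest (robot st False)"
  shows "gathers_from v W F r st"
proof -
  have "\<not> (stopped (robot st True) \<and> stopped (robot st False))"
    using sync by blast
  then obtain i where i: "exec_step random_approach v W F r st = robot_looks random_approach v W F r i st"
    by (metis exec_step_next_looker)
  define sI where "sI = robot st i"
  define sO where "sO = robot st (\<not> i)"
  define M where "M = (dest sI + dest sO) / 2"
  define T1 where "T1 = T + cmod (dest sO - dest sI) / 2 / v"
  have arrival: "T + cmod (M - dest sI) / v = T1" "T + cmod (M - dest sO) / v = T1"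
    by (simp_all add: T1_def M_def field_simps norm_divide norm_minus_commute)
  have apart': "dest sO \<noteq> dest sI"
    using apart by (cases i) (auto simp: sI_def sO_def)
  have parked: "\<not> stopped s' \<and> dest s' = M \<and> (\<forall>t\<ge>T1. rpos v s' t = M) \<and> T1 \<le> next_look v (W k) s'"
    if "s' = s\<lparr>lastlook := T, startp := p, dest := M, ncyc := c\<rparr>" "\<not> stopped s"
      "T + cmod (M - p) / v = T1" for s s' p c k
    using that rpos_arrived[OF speed, of s'] waits[of k c]
    by (simp add: next_look_def)
  define sI' where "sI' = sI\<lparr>lastlook := T, startp := dest sI, dest := M, ncyc := Suc (ncyc sI)\<rparr>"
  define st1 where "st1 = robot_upd st i sI'"
  have step1: "exec_step random_approach v W F r st = st1"
    using robot_looks_halfway[of F i st r v W "dest sO", OF frames] sync[of i] sync[of "\<not> i"] apart'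
    by (simp add: i st1_def sI'_def sI_def sO_def M_def)
  have "T < next_look v (W i) sI'"
    using apart' speed waits[of i "Suc (ncyc sI)"]
    by (simp add: sI'_def next_look_def M_def add_pos_nonneg norm_divide)
  define sO' where "sO' = sO\<lparr>lastlook := T, startp := dest sO, dest := M, ncyc := Suc (ncyc sO)\<rparr>"
  have "exec_step random_approach v W F r st1 = robot_looks random_approach v W F r (\<not> i) st1"
    using \<open>T < next_look v (W i) sI'\<close> sync[of "\<not> i"]
    by (intro exec_step_eq_robot_looks) (auto simp: st1_def sO_def)
  also have "\<dots> = robot_upd st1 (\<not> i) sO'"
    using robot_looks_halfway[of F "\<not> i" st1 r v W "dest sI", OF frames] sync[of "\<not> i"] apart'
      rpos_lastlook[of v sI']
    by (simp add: st1_def sI'_def sO'_def sO_def M_def add.commute)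
  finally have step2: "exec_step random_approach v W F r st1 = robot_upd st1 (\<not> i) sO'" .
  have "gathers_from v W F r (robot_upd st1 (\<not> i) sO')"
    using parked[OF sI'_def] parked[OF sO'_def] sync arrival
    by (intro parked_robots_gather[OF speed, where M = M and T = T1])
      (auto simp: st1_def robot_robot_upd sI_def sO_def)
  then show ?thesis
    using step1 step2 gathers_from_exec_step by metis
qed

definition gatherable :: "real \<Rightarrow> (bool \<Rightarrow> nat \<Rightarrow> real) \<Rightarrow> (bool \<Rightarrow> nat \<Rightarrow> complex \<Rightarrow> complex)
    \<Rightarrow> rstate \<times> rstate \<Rightarrow> bool" where
  "gatherable v W F st \<longleftrightarrow> (\<exists>plan N. \<forall>r.
     (\<forall>i k. k \<le> N \<longrightarrow> coin_ratio (r i k) = real_of_rat (plan i k)) \<longrightarrow> gathers_from v W F r st)"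

lemma gatherableI:
  assumes "\<And>r. (\<And>i k. k \<le> N \<Longrightarrow> coin_ratio (r i k) = real_of_rat (plan i k)) \<Longrightarrow> gathers_from v W F r st"
  shows "gatherable v W F st"
  unfolding gatherable_def using assms by blast

lemma rational_ratios_first_stays:
  fixes lam tau \<delta> :: real
  assumes "0 \<le> lam" "lam < 1" "0 < tau" "0 < \<delta>"
  obtains t s :: rat where "lam < real_of_rat t"
    and "real_of_rat t - lam < real_of_rat s * (1 - lam)" "real_of_rat s * (1 - lam) < 1 - real_of_rat t"
    and "(1 + lam - 2 * real_of_rat t) * tau < \<delta>"
proof -
  have "max lam ((1 + lam) / 2 - \<delta> / (2 * tau)) < (1 + lam) / 2"
    unfolding max_less_iff_conj using assms by (auto simp: field_simps)
  then obtain t where t_low: "max lam ((1 + lam) / 2 - \<delta> / (2 * tau)) < real_of_rat t"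
    and t_high: "real_of_rat t < (1 + lam) / 2"
    using of_rat_dense by blast
  have "(real_of_rat t - lam) / (1 - lam) < (1 - real_of_rat t) / (1 - lam)"
    using t_high assms(2) by (simp add: divide_strict_right_mono)
  then obtain s where "(real_of_rat t - lam) / (1 - lam) < real_of_rat s"
    and "real_of_rat s < (1 - real_of_rat t) / (1 - lam)"
    using of_rat_dense by blast
  then have "real_of_rat t - lam < real_of_rat s * (1 - lam)" "real_of_rat s * (1 - lam) < 1 - real_of_rat t"
    using assms(2) by (simp_all add: pos_divide_less_eq pos_less_divide_eq)
  moreover have "1 + lam - 2 * real_of_rat t < \<delta> / tau"
    using t_low by (simp add: field_simps)
  then have "(1 + lam - 2 * real_of_rat t) * tau < \<delta>"
    using assms(3) by (simp add: pos_less_divide_eq)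
  ultimately show thesis
    using t_low by (intro that) simp_all
qed

lemma rational_ratios_second_stays:
  fixes lam tau \<delta> :: real
  assumes "0 \<le> lam" "lam < 1" "0 < tau" "0 < \<delta>"
  obtains t s :: rat where "0 < real_of_rat s * (1 - lam)"
    and "lam + real_of_rat s * (1 - lam) < real_of_rat t" "real_of_rat t < 1 - real_of_rat s * (1 - lam)"
    and "(1 - lam - 2 * (real_of_rat s * (1 - lam))) * tau < \<delta>"
proof -
  define z where "z = \<delta> / (tau * (1 - lam))"
  have "max 0 (1/2 - z/2) < (1/2 :: real)"
    unfolding max_less_iff_conj using assms by (simp add: z_def)
  then obtain s where s_low: "max 0 (1/2 - z/2) < real_of_rat s" and s_high: "real_of_rat s < 1/2"
    using of_rat_dense by blast
  have "2 * real_of_rat s * (1 - lam) < 1 * (1 - lam)"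
    using s_high assms(2) by (intro mult_strict_right_mono) auto
  then have "lam + real_of_rat s * (1 - lam) < 1 - real_of_rat s * (1 - lam)"
    by (simp add: algebra_simps)
  then obtain t where "lam + real_of_rat s * (1 - lam) < real_of_rat t"
    "real_of_rat t < 1 - real_of_rat s * (1 - lam)"
    using of_rat_dense by blast
  moreover have "1 - 2 * real_of_rat s < z" using s_low by simp
  then have "(1 - 2 * real_of_rat s) * (tau * (1 - lam)) < \<delta>"
    using assms by (simp add: z_def pos_less_divide_eq)
  then have "(1 - lam - 2 * (real_of_rat s * (1 - lam))) * tau < \<delta>"
    by (simp add: algebra_simps)
  ultimately show thesis
    using s_low assms(2) by (intro that) simp_all
qed

text \<open>Robot X looks first, at time a, the other robot at time b. Covering the vector D from
  the start of X to that of the other robot takes time tau, and lam is the fraction of D that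
  X covers by time b if it heads straight for the other robot.\<close>

locale distinct_starts =
  fixes v :: real and W :: "bool \<Rightarrow> nat \<Rightarrow> real" and F :: "bool \<Rightarrow> nat \<Rightarrow> complex \<Rightarrow> complex"
    and p1 p2 :: complex
  assumes speed_pos: "v > 0"
    and waits_nonneg: "\<And>i k. W i k \<ge> 0"
    and frames_similar: "\<And>i k. similarity (F i k)"
    and starts_distinct: "p1 \<noteq> p2"
begin

definition "X = (W True 0 \<le> W False 0)"
definition "pX = (if X then p1 else p2)"
definition "pY = (if X then p2 else p1)"
definition "a = W X 0"
definition "b = W (\<not> X) 0"
definition "D = pY - pX"
definition "tau = cmod D / v"
definition "lam = (b - a) / tau"
definition "st0 = (init_state p1, init_state p2)"

lemma a_le_b: "a \<le> b"
  unfolding a_def b_def X_def by (cases "W True 0 \<le> W False 0") auto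

lemma X_or_a_less_b: "X \<or> a < b"
  unfolding a_def b_def X_def by (cases "W True 0 \<le> W False 0") auto

lemma a_nonneg: "a \<ge> 0"
  using waits_nonneg by (simp add: a_def)

lemma D_neq_0: "D \<noteq> 0"
  using starts_distinct by (auto simp: D_def pX_def pY_def)

lemma tau_pos: "tau > 0"
  using D_neq_0 speed_pos by (simp add: tau_def)

lemma lam_nonneg: "lam \<ge> 0"
  using a_le_b tau_pos by (simp add: lam_def)

lemma b_eq: "b = a + lam * tau"
  using tau_pos by (simp add: lam_def)

lemma lam_less_1: "b < a + tau \<Longrightarrow> lam < 1"
  using b_eq tau_pos by (simp add: mult_less_cancel_right2)

lemma pY_eq: "pY = pX + D"
  by (simp add: D_def)

lemma robot_st0: "robot st0 X = init_state pX" "robot st0 (\<not> X) = init_state pY"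
  by (cases X; simp add: st0_def robot_def pX_def pY_def)+

lemma norm_along_D: "cmod (pX + of_real x * D - (pX + of_real y * D)) = \<bar>x - y\<bar> * cmod D"
proof -
  have "pX + of_real x * D - (pX + of_real y * D) = of_real (x - y) * D"
    by (simp add: algebra_simps)
  then show ?thesis by (simp only: norm_mult norm_of_real)
qed

lemma along_D_eq_iff: "pX + of_real x * D = pX + of_real y * D \<longleftrightarrow> x = y"
  using D_neq_0 by auto

text \<open>The states after the first looks with ratio c: X heads for the point at fraction c of
  D; the other robot, if X is still moving at time b, sees it at the fraction lam of D and
  heads for the point at fraction c of the way towards it.\<close>

definition sX :: "real \<Rightarrow> rstate" where
  "sX c = (init_state pX)\<lparr>lastlook := a, startp := pX, dest := pX + of_real c * D, ncyc := 1\<rparr>"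

definition sY :: "real \<Rightarrow> rstate" where
  "sY c = (init_state pY)\<lparr>lastlook := b, startp := pY,
     dest := pY + of_real c * (pX + of_real lam * D - pY), ncyc := 1\<rparr>"

lemma dest_sX: "dest (sX c) = pX + of_real c * D"
  by (simp add: sX_def)

lemma startp_sY: "startp (sY c) = pX + of_real 1 * D"
  and dest_sY: "dest (sY c) = pX + of_real (1 - c * (1 - lam)) * D"
  by (simp_all add: sY_def pY_eq algebra_simps)

lemma next_look_sX: "next_look v (W X) (sX c) = a + \<bar>c\<bar> * tau + W X 1"
  by (simp add: next_look_def sX_def tau_def norm_mult)

lemma next_look_sY: "next_look v (W (\<not> X)) (sY c) = b + \<bar>c * (1 - lam)\<bar> * tau + W (\<not> X) 1"
  using norm_along_D[of "1 - c * (1 - lam)" 1]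
  by (simp add: next_look_def startp_sY dest_sY tau_def del: of_real_1) (simp add: sY_def)

lemma exec_step_st0:
  assumes "coin_ratio (r X 0) = c"
  shows "exec_step random_approach v W F r st0 = robot_upd st0 X (sX c)"
proof -
  have "exec_step random_approach v W F r st0 = robot_looks random_approach v W F r X st0"
    using X_or_a_less_b a_le_b
    by (intro exec_step_eq_robot_looks) (auto simp: robot_st0 next_look_def a_def b_def)
  also have "\<dots> = robot_upd st0 X (sX c)"
    using do_look_random_approach[of "F X" "init_state pX", OF frames_similar] starts_distinct assms
    by (auto simp: robot_looks_def robot_st0 rpos_stationary sX_def D_def pX_def pY_def
        next_look_def a_def)
  finally show ?thesis .
qed

lemma rpos_sX_at_b:
  assumes "lam < c"
  shows "rpos v (sX c) b = pX + of_real lam * D"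
proof -
  have c_pos: "c > 0" using assms lam_nonneg by linarith
  have "rpos v (sX c) b = pX + of_real (min 1 ((b - a) * v / cmod (of_real c * D))) * (of_real c * D)"
    by (simp add: rpos_def sX_def)
  also have "min 1 ((b - a) * v / cmod (of_real c * D)) = lam / c"
  proof -
    have "(b - a) * v / cmod (of_real c * D) = lam / c"
      using b_eq speed_pos D_neq_0 c_pos by (simp add: norm_mult tau_def field_simps)
    then show ?thesis using assms c_pos by simp
  qed
  also have "pX + of_real (lam / c) * (of_real c * D) = pX + of_real lam * D"
    using c_pos by simp
  finally show ?thesis .
qed

lemma exec_step_sX:
  assumes "lam < c" "lam < 1" "coin_ratio (r (\<not> X) 0) = c'"
  shows "exec_step random_approach v W F r (robot_upd st0 X (sX c))
    = robot_upd (robot_upd st0 X (sX c)) (\<not> X) (sY c')"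
proof -
  let ?st1 = "robot_upd st0 X (sX c)"
  have c_pos: "c > 0" using assms lam_nonneg by linarith
  have "b < a + c * tau"
    using b_eq assms(1) tau_pos by (simp add: mult_strict_right_mono)
  then have "exec_step random_approach v W F r ?st1 = robot_looks random_approach v W F r (\<not> X) ?st1"
    using next_look_sX[of c] c_pos waits_nonneg[of X 1]
    by (intro exec_step_eq_robot_looks) (simp_all add: robot_st0 next_look_def b_def)
  also have "\<dots> = robot_upd ?st1 (\<not> X) (sY c')"
  proof -
    have "pX + of_real lam * D \<noteq> pX + of_real 1 * D"
      using assms(2) by (simp only: along_D_eq_iff)
    then show ?thesis
      using do_look_random_approach[of "F (\<not> X)" "init_state pY", OF frames_similar]
        rpos_sX_at_b[OF assms(1)] assms(3)
      by (simp add: robot_looks_def robot_st0 sY_def pY_eq next_look_def b_def)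
  qed
  finally show ?thesis .
qed

lemma gathers_from_st0:
  assumes "coin_ratio (r X 0) = c" "coin_ratio (r (\<not> X) 0) = c'" "lam < c" "lam < 1"
    and "gathers_from v W F r (robot_upd (robot_upd st0 X (sX c)) (\<not> X) (sY c'))"
  shows "gathers_from v W F r st0"
  using assms exec_step_st0 exec_step_sX gathers_from_exec_step by metis

lemma rpos_sX_along_D:
  assumes "a \<le> t"
  obtains \<theta> where "0 \<le> \<theta>" "\<theta> \<le> 1" "rpos v (sX c) t = pX + of_real (\<theta> * c) * D"
proof -
  have "lastlook (sX c) \<le> t" using assms by (simp add: sX_def)
  then obtain \<theta> where "0 \<le> \<theta>" "\<theta> \<le> 1"
    "rpos v (sX c) t = startp (sX c) + of_real \<theta> * (dest (sX c) - startp (sX c))"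
    by (rule rpos_on_segment[OF speed_pos])
  then show thesis by (intro that[of \<theta>]) (simp_all add: sX_def)
qed

lemma rpos_sY_along_D:
  assumes "b \<le> t"
  obtains \<theta> where "0 \<le> \<theta>" "\<theta> \<le> 1" "rpos v (sY c) t = pX + of_real (1 - \<theta> * (c * (1 - lam))) * D"
proof -
  have "lastlook (sY c) \<le> t" using assms by (simp add: sY_def)
  then obtain \<theta> where "0 \<le> \<theta>" "\<theta> \<le> 1"
    "rpos v (sY c) t = startp (sY c) + of_real \<theta> * (dest (sY c) - startp (sY c))"
    by (rule rpos_on_segment[OF speed_pos])
  moreover have "startp (sY c) + of_real \<theta> * (dest (sY c) - startp (sY c))
      = pX + of_real (1 - \<theta> * (c * (1 - lam))) * D"
    by (simp add: startp_sY dest_sY algebra_simps)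
  ultimately show thesis by (intro that[of \<theta>]) simp_all
qed

lemma rpos_sX_avoids:
  assumes "a \<le> t" "0 \<le> c" "c < x"
  shows "rpos v (sX c) t \<noteq> pX + of_real x * D"
proof -
  obtain \<theta> where "0 \<le> \<theta>" "\<theta> \<le> 1" and \<theta>: "rpos v (sX c) t = pX + of_real (\<theta> * c) * D"
    using assms(1) by (rule rpos_sX_along_D)
  then have "\<theta> * c \<le> c" using assms(2) by (simp add: mult_left_le_one_le)
  then show ?thesis unfolding \<theta> along_D_eq_iff using assms(3) by simp
qed

lemma rpos_sY_avoids:
  assumes "b \<le> t" "0 \<le> c * (1 - lam)" "x < 1 - c * (1 - lam)"
  shows "rpos v (sY c) t \<noteq> pX + of_real x * D"
proof -
  obtain \<theta> where "0 \<le> \<theta>" "\<theta> \<le> 1"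
    and \<theta>: "rpos v (sY c) t = pX + of_real (1 - \<theta> * (c * (1 - lam))) * D"
    using assms(1) by (rule rpos_sY_along_D)
  then have "\<theta> * (c * (1 - lam)) \<le> c * (1 - lam)" using assms(2) by (simp add: mult_left_le_one_le)
  then show ?thesis unfolding \<theta> along_D_eq_iff using assms(3) by simp
qed

lemma rpos_sX_arrived: "a + \<bar>c\<bar> * tau \<le> t \<Longrightarrow> rpos v (sX c) t = dest (sX c)"
  using rpos_arrived[OF speed_pos, of "sX c" t] by (simp add: sX_def tau_def norm_mult)

lemma rpos_sY_arrived: "b + \<bar>c * (1 - lam)\<bar> * tau \<le> t \<Longrightarrow> rpos v (sY c) t = dest (sY c)"
  using rpos_arrived[OF speed_pos, of "sY c" t] next_look_sY[of c]
  by (simp add: next_look_def sY_def)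


text \<open>If the other robot first looks only after X could have reached it, X heads straight
  for it and finds it still there.\<close>

lemma gatherable_if_late_first_look:
  assumes late: "a + tau \<le> b"
  shows "gatherable v W F st0"
proof (rule gatherableI[where N = 0 and plan = "\<lambda>_ _. 1"])
  fix r :: "bool \<Rightarrow> nat \<Rightarrow> bits"
  assume "\<And>i k. k \<le> 0 \<Longrightarrow> coin_ratio (r i k) = real_of_rat 1"
  then have ratio: "coin_ratio (r X 0) = 1" by simp
  define f where "f k = b + (\<Sum>i\<in>{1..k}. W (\<not> X) i)" for k
  interpret S: stayer_approacher v W F r "\<not> X" pY pX 0 a tau f 0 0 0
  proof
    show "pY \<noteq> pX" using D_neq_0 by (simp add: D_def)
    show "tau = cmod (pY - pX) / v" by (simp add: tau_def D_def)
    show "a + tau \<le> f 0" using late by (simp add: f_def)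
  qed (use speed_pos waits_nonneg frames_similar a_nonneg ratio in \<open>simp_all add: f_def\<close>)
  have "S.invariant (robot_upd st0 X (sX 1))"
  proof -
    have "S.stayer_inv (init_state pY)"
      by (simp add: S.stayer_inv_def next_look_def f_def b_def rpos_stationary)
    moreover have "S.approacher_inv (init_state pY) (sX 1)"
      unfolding S.approacher_inv_def using waits_nonneg[of X 1] a_le_b next_look_sX[of 1]
      by (simp add: sX_def pY_eq next_look_def b_def)
    ultimately show ?thesis by (simp add: S.invariant_def robot_st0)
  qed
  then show "gathers_from v W F r st0"
    using S.gathers_from_invariant exec_step_st0[of r 1, OF ratio] gathers_from_exec_step by metis
qed

text \<open>With ratio 1 in the first cycle both robots end their first moves at time a + tau. Equal
  second waits make them look simultaneously again, and ratio 1/2 brings them to the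
  midpoint.\<close>

lemma gatherable_if_equal_second_waits:
  assumes early: "b < a + tau" and same_wait: "W X 1 = W (\<not> X) 1"
  shows "gatherable v W F st0"
proof (rule gatherableI[where N = 1 and plan = "\<lambda>_ k. if k = 0 then 1 else 1/2"])
  fix r :: "bool \<Rightarrow> nat \<Rightarrow> bits"
  assume plan: "\<And>i k. k \<le> 1 \<Longrightarrow> coin_ratio (r i k) = real_of_rat (if k = 0 then 1 else 1/2)"
  have lam1: "lam < 1" using lam_less_1[OF early] .
  define T where "T = a + tau + W X 1"
  let ?st2 = "robot_upd (robot_upd st0 X (sX 1)) (\<not> X) (sY 1)"
  have next_look_sY: "next_look v (W (\<not> X)) (sY 1) = T"
    using next_look_sY[of 1] lam1 b_eq same_wait by (simp add: T_def algebra_simps)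
  have arrived_X: "rpos v (sX 1) t = dest (sX 1)" if "T \<le> t" for t
    using that waits_nonneg[of X 1] by (intro rpos_sX_arrived) (simp add: T_def)
  have arrived_Y: "rpos v (sY 1) t = dest (sY 1)" if "T \<le> t" for t
    using that waits_nonneg[of X 1] lam1 b_eq by (intro rpos_sY_arrived) (simp add: T_def algebra_simps)
  have "gathers_from v W F r ?st2"
  proof (rule midpoint_gather[OF speed_pos waits_nonneg frames_similar])
    fix i
    have "\<not> stopped (sX 1) \<and> next_look v (W X) (sX 1) = T \<and>
        (\<forall>t\<ge>T. rpos v (sX 1) t = dest (sX 1)) \<and> coin_ratio (r X (ncyc (sX 1))) = 1/2"
      using next_look_sX[of 1] arrived_X plan[of 1 X]
      by (auto simp: T_def sX_def of_rat_divide)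
    moreover have "\<not> stopped (sY 1) \<and> next_look v (W (\<not> X)) (sY 1) = T \<and>
        (\<forall>t\<ge>T. rpos v (sY 1) t = dest (sY 1)) \<and> coin_ratio (r (\<not> X) (ncyc (sY 1))) = 1/2"
      using next_look_sY arrived_Y plan[of 1 "\<not> X"]
      by (auto simp: sY_def of_rat_divide)
    ultimately show "\<not> stopped (robot ?st2 i) \<and> next_look v (W i) (robot ?st2 i) = T \<and>
        (\<forall>t\<ge>T. rpos v (robot ?st2 i) t = dest (robot ?st2 i)) \<and>
        coin_ratio (r i (ncyc (robot ?st2 i))) = 1/2"
      by (cases "i = X") (auto simp: robot_robot_upd)
    have "dest (sX 1) \<noteq> dest (sY 1)"
      unfolding dest_sX dest_sY along_D_eq_iff using lam1 by simp
    then show "dest (robot ?st2 True) \<noteq> dest (robot ?st2 False)"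
      by (cases X) (auto simp: robot_robot_upd)
  qed
  then show "gathers_from v W F r st0"
    using plan[of 0 X] plan[of 0 "\<not> X"] lam1 lam_nonneg
    by (intro gathers_from_st0[of r 1 1]) simp_all
qed

text \<open>If the later waits of one robot add up to more than the second wait of the other, the
  first robot stays where its first move took it, and the other robot reaches it in its second move. The
  ratios of the first moves are chosen so that the approaching robot does not pass through
  the meeting point earlier and arrives there before the stayer moves on.\<close>

lemma gathers_from_if_X_stays:
  assumes lam1: "lam < 1" and n1: "1 \<le> n"
    and lam_less_\<rho>: "lam < \<rho>" and \<sigma>_low: "\<rho> - lam < c * (1 - lam)" and \<sigma>_high: "c * (1 - lam) < 1 - \<rho>"
    and longer: "(1 + lam - 2 * \<rho>) * tau < (\<Sum>i\<in>{1..n}. W X i) - W (\<not> X) 1"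
    and ratios: "coin_ratio (r X 0) = \<rho>" "coin_ratio (r (\<not> X) 0) = c" "coin_ratio (r (\<not> X) 1) = 1"
      "\<And>k. 1 \<le> k \<Longrightarrow> k < n \<Longrightarrow> coin_ratio (r X k) = 0"
  shows "gathers_from v W F r st0"
proof -
  define \<sigma> where "\<sigma> = c * (1 - lam)"
  have \<sigma>_pos: "\<sigma> > 0" and \<rho>_pos: "\<rho> > 0"
    using \<sigma>_low lam_less_\<rho> lam_nonneg by (simp_all add: \<sigma>_def)
  define P where "P = pX + of_real \<rho> * D"
  define Q where "Q = pX + of_real (1 - \<sigma>) * D"
  define \<gamma> where "\<gamma> = b + \<sigma> * tau + W (\<not> X) 1"
  define e where "e = (1 - \<sigma> - \<rho>) * tau"
  define f where "f k = a + \<rho> * tau + (\<Sum>i\<in>{1..k}. W X i)" for k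
  have dest: "dest (sX \<rho>) = P" "dest (sY c) = Q"
    by (simp_all only: P_def Q_def dest_sX dest_sY \<sigma>_def)
  interpret S: stayer_approacher v W F r X P Q "a + \<rho> * tau" \<gamma> e f 1 n 1
  proof
    show "P \<noteq> Q" unfolding P_def Q_def along_D_eq_iff using \<sigma>_high by (simp add: \<sigma>_def)
    show "e = cmod (P - Q) / v"
      unfolding P_def Q_def norm_along_D using \<sigma>_high by (simp add: e_def tau_def \<sigma>_def)
    have "\<rho> * tau \<le> (lam + \<sigma>) * tau"
      using \<sigma>_low tau_pos by (intro mult_right_mono) (auto simp: \<sigma>_def)
    then show "a + \<rho> * tau \<le> \<gamma>"
      using b_eq waits_nonneg[of "\<not> X" 1] by (simp add: \<gamma>_def distrib_right)
    show "\<gamma> + e \<le> f n"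
      using longer b_eq by (simp add: \<gamma>_def e_def f_def algebra_simps)
  qed (use speed_pos waits_nonneg frames_similar ratios in \<open>simp_all add: f_def\<close>)
  have next_look_sX: "next_look v (W X) (sX \<rho>) = f 1"
    using next_look_sX[of \<rho>] \<rho>_pos by (simp add: f_def)
  have "S.stayer_inv (sX \<rho>)"
    unfolding S.stayer_inv_def using n1 next_look_sX rpos_sX_arrived[of \<rho>] dest \<rho>_pos
    by (auto simp: sX_def)
  moreover have "S.approacher_inv (sX \<rho>) (sY c)"
  proof -
    have "next_look v (W (\<not> X)) (sY c) = \<gamma>"
      using next_look_sY[of c] \<sigma>_pos by (simp add: \<gamma>_def \<sigma>_def)
    moreover have "rpos v (sY c) t \<noteq> P" if "lastlook (sY c) \<le> t" for t
      unfolding P_def using that \<sigma>_pos \<sigma>_high by (intro rpos_sY_avoids) (simp_all add: sY_def \<sigma>_def)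
    moreover have "lam * tau \<le> \<rho> * tau"
      using lam_less_\<rho> tau_pos by (intro mult_right_mono) auto
    then have "b \<le> next_look v (W X) (sX \<rho>)"
      using next_look_sX b_eq waits_nonneg[of X 1] by (simp add: f_def)
    ultimately show ?thesis
      unfolding S.approacher_inv_def using dest by (simp add: sY_def)
  qed
  ultimately have "S.invariant (robot_upd (robot_upd st0 X (sX \<rho>)) (\<not> X) (sY c))"
    unfolding S.invariant_def by (simp add: robot_robot_upd)
  then show ?thesis
    using ratios lam_less_\<rho> lam1 by (intro gathers_from_st0[of r \<rho> c] S.gathers_from_invariant)
qed

lemma gathers_from_if_Y_stays:
  assumes lam1: "lam < 1" and n1: "1 \<le> n" and \<sigma>_pos: "0 < c * (1 - lam)"
    and \<rho>_low: "lam + c * (1 - lam) < \<rho>" and \<rho>_high: "\<rho> < 1 - c * (1 - lam)"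
    and longer: "(1 - lam - 2 * (c * (1 - lam))) * tau < (\<Sum>i\<in>{1..n}. W (\<not> X) i) - W X 1"
    and ratios: "coin_ratio (r X 0) = \<rho>" "coin_ratio (r (\<not> X) 0) = c" "coin_ratio (r X 1) = 1"
      "\<And>k. 1 \<le> k \<Longrightarrow> k < n \<Longrightarrow> coin_ratio (r (\<not> X) k) = 0"
  shows "gathers_from v W F r st0"
proof -
  define \<sigma> where "\<sigma> = c * (1 - lam)"
  have lam_less_\<rho>: "lam < \<rho>" and \<rho>_pos: "\<rho> > 0"
    using \<rho>_low \<sigma>_pos lam_nonneg by (simp_all add: \<sigma>_def)
  define P where "P = pX + of_real (1 - \<sigma>) * D"
  define Q where "Q = pX + of_real \<rho> * D"
  define \<gamma> where "\<gamma> = a + \<rho> * tau + W X 1"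
  define e where "e = (1 - \<sigma> - \<rho>) * tau"
  define f where "f k = b + \<sigma> * tau + (\<Sum>i\<in>{1..k}. W (\<not> X) i)" for k
  have dest: "dest (sX \<rho>) = Q" "dest (sY c) = P"
    by (simp_all only: P_def Q_def dest_sX dest_sY \<sigma>_def)
  interpret S: stayer_approacher v W F r "\<not> X" P Q "b + \<sigma> * tau" \<gamma> e f 1 n 1
  proof
    show "P \<noteq> Q" unfolding P_def Q_def along_D_eq_iff using \<rho>_high by (simp add: \<sigma>_def)
    show "e = cmod (P - Q) / v"
      unfolding P_def Q_def norm_along_D using \<rho>_high by (simp add: e_def tau_def \<sigma>_def)
    have "(lam + \<sigma>) * tau \<le> \<rho> * tau"
      using \<rho>_low tau_pos by (intro mult_right_mono) (auto simp: \<sigma>_def)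
    then show "b + \<sigma> * tau \<le> \<gamma>"
      using b_eq waits_nonneg[of X 1] by (simp add: \<gamma>_def distrib_right)
    show "\<gamma> + e \<le> f n"
      using longer b_eq by (simp add: \<gamma>_def e_def f_def \<sigma>_def algebra_simps)
  qed (use speed_pos waits_nonneg frames_similar ratios in \<open>simp_all add: f_def\<close>)
  have next_look_sY: "next_look v (W (\<not> X)) (sY c) = f 1"
    using next_look_sY[of c] \<sigma>_pos by (simp add: f_def \<sigma>_def)
  have "S.stayer_inv (sY c)"
    unfolding S.stayer_inv_def using n1 next_look_sY rpos_sY_arrived[of c] dest \<sigma>_pos
    by (auto simp: sY_def \<sigma>_def)
  moreover have "S.approacher_inv (sY c) (sX \<rho>)"
  proof -
    have "next_look v (W X) (sX \<rho>) = \<gamma>"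
      using next_look_sX[of \<rho>] \<rho>_pos by (simp add: \<gamma>_def)
    moreover have "rpos v (sX \<rho>) t \<noteq> P" if "lastlook (sX \<rho>) \<le> t" for t
      unfolding P_def using that \<rho>_pos \<rho>_high by (intro rpos_sX_avoids) (simp_all add: sX_def \<sigma>_def)
    moreover have "a \<le> next_look v (W (\<not> X)) (sY c)"
      using next_look_sY a_le_b \<sigma>_pos tau_pos waits_nonneg[of "\<not> X" 1]
      by (simp add: f_def \<sigma>_def add_increasing2)
    ultimately show ?thesis
      unfolding S.approacher_inv_def using dest by (simp add: sX_def)
  qed
  ultimately have "S.invariant (robot_upd (robot_upd st0 X (sX \<rho>)) (\<not> X) (sY c))"
    unfolding S.invariant_def by (simp add: robot_robot_upd)
  then show ?thesis
    using ratios lam_less_\<rho> lam1 by (intro gathers_from_st0[of r \<rho> c] S.gathers_from_invariant)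
qed

lemma gatherable_if_X_waits_longer:
  assumes early: "b < a + tau" and n1: "1 \<le> n" and longer: "W (\<not> X) 1 < (\<Sum>i\<in>{1..n}. W X i)"
  shows "gatherable v W F st0"
proof -
  have "0 < (\<Sum>i\<in>{1..n}. W X i) - W (\<not> X) 1" using longer by simp
  then obtain t s where ratios: "lam < real_of_rat t"
    "real_of_rat t - lam < real_of_rat s * (1 - lam)" "real_of_rat s * (1 - lam) < 1 - real_of_rat t"
    "(1 + lam - 2 * real_of_rat t) * tau < (\<Sum>i\<in>{1..n}. W X i) - W (\<not> X) 1"
    by (rule rational_ratios_first_stays[OF lam_nonneg lam_less_1[OF early] tau_pos])
  show ?thesis
  proof (rule gatherableI[where N = n and
        plan = "\<lambda>i k. if k = 0 then (if i = X then t else s) else if i = (\<not> X) \<and> k = 1 then 1 else 0"])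
    fix r :: "bool \<Rightarrow> nat \<Rightarrow> bits"
    assume plan: "\<And>i k. k \<le> n \<Longrightarrow> coin_ratio (r i k) = real_of_rat
      (if k = 0 then (if i = X then t else s) else if i = (\<not> X) \<and> k = 1 then 1 else 0)"
    show "gathers_from v W F r st0"
      using plan[of 0 X] plan[of 0 "\<not> X"] plan[of 1 "\<not> X"] plan[of _ X] n1
      by (intro gathers_from_if_X_stays[OF lam_less_1[OF early] n1 ratios]) simp_all
  qed
qed

lemma gatherable_if_Y_waits_longer:
  assumes early: "b < a + tau" and n1: "1 \<le> n" and longer: "W X 1 < (\<Sum>i\<in>{1..n}. W (\<not> X) i)"
  shows "gatherable v W F st0"
proof -
  have "0 < (\<Sum>i\<in>{1..n}. W (\<not> X) i) - W X 1" using longer by simp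
  then obtain t s where ratios: "0 < real_of_rat s * (1 - lam)"
    "lam + real_of_rat s * (1 - lam) < real_of_rat t" "real_of_rat t < 1 - real_of_rat s * (1 - lam)"
    "(1 - lam - 2 * (real_of_rat s * (1 - lam))) * tau < (\<Sum>i\<in>{1..n}. W (\<not> X) i) - W X 1"
    by (rule rational_ratios_second_stays[OF lam_nonneg lam_less_1[OF early] tau_pos])
  show ?thesis
  proof (rule gatherableI[where N = n and
        plan = "\<lambda>i k. if k = 0 then (if i = X then t else s) else if i = X \<and> k = 1 then 1 else 0"])
    fix r :: "bool \<Rightarrow> nat \<Rightarrow> bits"
    assume plan: "\<And>i k. k \<le> n \<Longrightarrow> coin_ratio (r i k) = real_of_rat
      (if k = 0 then (if i = X then t else s) else if i = X \<and> k = 1 then 1 else 0)"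
    show "gathers_from v W F r st0"
      using plan[of 0 X] plan[of 0 "\<not> X"] plan[of 1 X] plan[of _ "\<not> X"] n1
      by (intro gathers_from_if_Y_stays[OF lam_less_1[OF early] n1 ratios]) simp_all
  qed
qed

lemma gatherable_st0: "gatherable v W F st0"
proof (cases "a + tau \<le> b")
  case True
  then show ?thesis by (rule gatherable_if_late_first_look)
next
  case False
  then have early: "b < a + tau" by simp
  show ?thesis
  proof (cases "\<exists>n\<ge>1. W (\<not> X) 1 < (\<Sum>i\<in>{1..n}. W X i)")
    case True
    then show ?thesis using gatherable_if_X_waits_longer[OF early] by blast
  next
    case X_short: False
    show ?thesis
    proof (cases "\<exists>n\<ge>1. W X 1 < (\<Sum>i\<in>{1..n}. W (\<not> X) i)")
      case True
      then show ?thesis using gatherable_if_Y_waits_longer[OF early] by blast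
    next
      case False
      have "\<not> W (\<not> X) 1 < W X 1" "\<not> W X 1 < W (\<not> X) 1"
        using spec[OF X_short[unfolded not_ex], of 1] spec[OF False[unfolded not_ex], of 1] by simp_all
      then show ?thesis
        by (intro gatherable_if_equal_second_waits[OF early]) simp
    qed
  qed
qed

end

lemma gatherable_init:
  assumes speed: "v > 0" and waits: "\<And>i k. W i k \<ge> 0" and frames: "\<And>i k. similarity (F i k)"
  shows "gatherable v W F (init_state p1, init_state p2)"
proof (cases "p1 = p2")
  case True
  have "gathers_from v W F r (init_state p1, init_state p2)" for r
  proof (rule parked_robots_gather[OF speed])
    fix i
    show "\<not> stopped (robot (init_state p1, init_state p2) i) \<and> dest (robot (init_state p1, init_state p2) i) = p1 \<and>
      (\<forall>t\<ge>0. rpos v (robot (init_state p1, init_state p2) i) t = p1) \<and>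
      0 \<le> next_look v (W i) (robot (init_state p1, init_state p2) i)"
      using True waits[of i 0] by (cases i) (auto simp: robot_def rpos_stationary next_look_def)
  qed
  then show ?thesis
    by (intro gatherableI[where N = 0 and plan = "\<lambda>_ _. 0"])
next
  case False
  interpret distinct_starts v W F p1 p2
    using speed waits frames False by unfold_locales
  show ?thesis using gatherable_st0 by (simp add: st0_def)
qed

lemma gathered_iff_gathers_from:
  "gathered random_approach v W F r p1 p2 \<longleftrightarrow> gathers_from v W F r (init_state p1, init_state p2)"
  by (simp add: gathered_def gathers_from_def gathered_state_def execution_def Let_def)

lemma coin_space_cylinder:
  assumes "finite J"
  shows "{\<omega> \<in> space coin_space. \<forall>x\<in>J. \<omega> x = val x} \<in> sets coin_space"
    and "measure coin_space {\<omega> \<in> space coin_space. \<forall>x\<in>J. \<omega> x = val x} > 0"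
proof -
  let ?M = "\<lambda>_::bool \<times> nat \<times> nat. measure_pmf (bernoulli_pmf (1/2))"
  interpret P: product_prob_space ?M UNIV
    by (intro product_prob_space.intro product_sigma_finite.intro product_prob_space_axioms.intro)
      (auto intro: prob_space_imp_sigma_finite prob_space_measure_pmf)
  have cylinder: "{\<omega> \<in> space coin_space. \<forall>x\<in>J. \<omega> x = val x} = prod_emb UNIV ?M J (\<Pi>\<^sub>E x\<in>J. {val x})"
    unfolding coin_space_def prod_emb_def space_PiM
    by (simp only: set_eq_iff mem_Collect_eq vimage_eq Int_iff restrict_PiE_iff singleton_iff) blast
  show "{\<omega> \<in> space coin_space. \<forall>x\<in>J. \<omega> x = val x} \<in> sets coin_space"
    unfolding cylinder unfolding coin_space_def by (rule sets_PiM_I) (use assms in auto)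
  have "measure coin_space {\<omega> \<in> space coin_space. \<forall>x\<in>J. \<omega> x = val x} = (\<Prod>x\<in>J. measure (?M x) {val x})"
    unfolding cylinder unfolding coin_space_def by (rule P.measure_PiM_emb) (use assms in auto)
  also have "\<dots> = (\<Prod>x\<in>J. 1/2)"
    by (intro prod.cong refl)
      (auto simp: measure_pmf_single pmf_bernoulli_True pmf_bernoulli_False split: bool.splits)
  finally show "measure coin_space {\<omega> \<in> space coin_space. \<forall>x\<in>J. \<omega> x = val x} > 0" by simp
qed

text \<open>The coin sequences whose cycles up to N decode to the rationals prescribed by plan:
  the coins of cycle k of robot i start with to_nat (plan i k) heads, followed by a tail.\<close>

definition plan_cylinder :: "(bool \<Rightarrow> nat \<Rightarrow> rat) \<Rightarrow> nat \<Rightarrow> (bool \<times> nat \<times> nat \<Rightarrow> bool) set" where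
  "plan_cylinder plan N = {\<omega> \<in> space coin_space.
     \<forall>x \<in> (SIGMA i:UNIV. SIGMA k:{..N}. {..to_nat (plan i k)}). \<omega> x = (case x of (i, k, j) \<Rightarrow> j < to_nat (plan i k))}"

lemma plan_cylinder_measurable: "plan_cylinder plan N \<in> sets coin_space"
  and plan_cylinder_pos: "measure coin_space (plan_cylinder plan N) > 0"
  unfolding plan_cylinder_def by (intro coin_space_cylinder finite_SigmaI; simp)+

lemma coin_ratio_plan_cylinder:
  assumes "\<omega> \<in> plan_cylinder plan N" "k \<le> N"
  shows "coin_ratio (bits_of \<omega> i k) = real_of_rat (plan i k)"
proof -
  have heads: "\<omega> (i, k, j) = (j < to_nat (plan i k))" if "j \<le> to_nat (plan i k)" for j
    using assms that by (auto simp: plan_cylinder_def)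
  have "(LEAST j. \<not> bits_of \<omega> i k j) = to_nat (plan i k)"
  proof (rule Least_equality)
    show "\<not> bits_of \<omega> i k (to_nat (plan i k))"
      using heads[of "to_nat (plan i k)"] by (simp add: bits_of_def)
    show "to_nat (plan i k) \<le> j" if "\<not> bits_of \<omega> i k j" for j
      using heads[of j] that by (fastforce simp: bits_of_def)
  qed
  then show ?thesis by (simp add: coin_ratio_def)
qed

theorem theorem1:
  "\<exists>A :: algo. \<forall>(v::real) (W :: bool \<Rightarrow> nat \<Rightarrow> real)
      (F :: bool \<Rightarrow> nat \<Rightarrow> complex \<Rightarrow> complex) (p1::complex) (p2::complex).
     v > 0 \<longrightarrow> (\<forall>i k. W i k \<ge> 0) \<longrightarrow> (\<forall>i k. similarity (F i k)) \<longrightarrow>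
     (\<exists>E \<in> sets coin_space.
        E \<subseteq> {\<omega> \<in> space coin_space. gathered A v W F (bits_of \<omega>) p1 p2} \<and>
        measure coin_space E > 0)"
proof (intro exI[of _ random_approach] allI impI)
  fix v :: real and W :: "bool \<Rightarrow> nat \<Rightarrow> real" and F :: "bool \<Rightarrow> nat \<Rightarrow> complex \<Rightarrow> complex"
    and p1 p2 :: complex
  assume "v > 0" "\<forall>i k. W i k \<ge> 0" "\<forall>i k. similarity (F i k)"
  then obtain plan N where plan: "\<And>r. \<forall>i k. k \<le> N \<longrightarrow> coin_ratio (r i k) = real_of_rat (plan i k) \<Longrightarrow>
      gathers_from v W F r (init_state p1, init_state p2)"
    using gatherable_init[of v W F p1 p2] unfolding gatherable_def by blast
  have "plan_cylinder plan N \<subseteq> {\<omega> \<in> space coin_space. gathered random_approach v W F (bits_of \<omega>) p1 p2}"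
    using plan coin_ratio_plan_cylinder by (auto simp: gathered_iff_gathers_from plan_cylinder_def)
  then show "\<exists>E \<in> sets coin_space.
      E \<subseteq> {\<omega> \<in> space coin_space. gathered random_approach v W F (bits_of \<omega>) p1 p2} \<and>
      measure coin_space E > 0"
    using plan_cylinder_measurable plan_cylinder_pos by blast
qed

end
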